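(* Let $\mathcal C$ be a concept hierarchy, $r_1,r_2,\epsilon\in[0,1]$, $a>0$ a real with $r_1\le ar_2(1-\epsilon)$, $m$ a positive integer, and let $\mathcal A_1$ and $\mathcal L$ be the networks defined below (with $\mathcal L$ having fixed sets $F$ and $E$ satisfying the stated constraints). Then $\mathcal L$ $implements_1$ $\mathcal A_1$: for every $B\subseteq C_0$, in the executions of $\mathcal A_1$ and $\mathcal L$ on input $B$, for every concept $c$, if $rep(c)$ fires at time $level(c)$ in $\mathcal A_1$, then at least $m(1-\epsilon)$ of the neurons in $reps(c)$ fire at time $level(c)$ in $\mathcal L$.
   Context: Concept hierarchies: fix positive integers $\ell_{max},n,k$. A universal set $D$ of concepts is partitioned into disjoint sets $D_0,\dots,D_{\ell_{max}}$ with $|D_0|=n$; $level(c)=\ell$ for $c\in D_\ell$. A concept hierarchy $\mathcal C$ consists of $C\subseteq D$, with $C_\ell=C\cap D_\ell$, and for each $c\in C_\ell$ with $1\le\ell\le\ell_{max}$ a set $children(c)\subseteq C_{\ell-1}$, such that $|C_{\ell_{max}}|=k$, $|children(c)|=k$ for all such $c$, and $children(c)\cap children(c')=\emptyset$ for distinct $c,c'\in C_\ell$. Common network dynamics: neurons partitioned into layers $N_0,\dots,N_{\ell_{max}}$; threshold $\tau$; weights $w(u,v)\in\{0,1\}$ for $u\in N_{\ell-1}$, $v\in N_\ell$. Failed neurons never fire. A non-failed neuron $v\in N_\ell$, $\ell\ge1$, does not fire at time 0 and fires at time $t\ge1$ iff $\sum_{u\in N_{\ell-1}}w(u,v)x_u(t-1)\ge\tau$,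 where $x_u(s)\in\{0,1\}$ indicates whether $u$ fires at time $s$. $\mathcal A_1$: no failures; each $c\in D_0$ has $rep(c)\in N_0$, each $c\in C$ with $level(c)\ge1$ has $rep(c)\in N_{level(c)}$, all distinct; $w(u,v)=1$ iff $v=rep(c)$, $u=rep(c')$ for a child $c'$ of $c$, else $0$; $\tau=r_2k$. Input $B\subseteq C_0$: the layer-0 neurons $rep(b)$, $b\in B$, fire at time 0, no other layer-0 neuron fires at time 0, and no layer-0 neuron fires at any other time. $\mathcal L$: each $c\in D_0$ has a set $reps(c)$ of $m$ neurons in $N_0$, each $c\in C$ with $level(c)\ge1$ a set $reps(c)$ of $m$ neurons in $N_{level(c)}$, all pairwise disjoint. $E$ is a set of pairs $(u,v)$ with $v\in reps(c)$ and $u\in reps(c')$ for some child $c'$ of $c$; $w(u,v)=1$ iff $(u,v)\in E$, else $0$. Threshold $\tau=ar_2km(1-\epsilon)$. A fixed set $F$ of neurons is failed. Constraints: for every concept $c$, at least $m(1-\epsilon)$ neurons of $reps(c)$ are not in $F$; and for every $c$ with $level(c)\ge1$, every $v\in reps(c)$ and every child $c'$ of $c$, there are at least $am(1-\epsilon)$ neurons $u\in reps(c')\setminus F$ with $(u,v)\in E$. Input $B\subseteq C_0$: a layer-0 neuron fires at time 0 iff it is in $\bigcup_{b\in B}reps(b)\setminus F$, and no layer-0 neuron fires at any other time. *)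

theory Defs
  imports Complex_Main
begin

text \<open>The universal set D of concepts is partitioned into
  D_0, ..., D_lmax by the level function lvl (D_l = {c in D. lvl c = l}).
  C is the set of concepts of the hierarchy, C_l = {c in C. lvl c = l}.\<close>
definition concept_hierarchy ::
  "nat \<Rightarrow> nat \<Rightarrow> nat \<Rightarrow> 'c set \<Rightarrow> ('c \<Rightarrow> nat) \<Rightarrow> 'c set \<Rightarrow> ('c \<Rightarrow> 'c set) \<Rightarrow> bool" where
  "concept_hierarchy lmax n k D lvl C children \<longleftrightarrow>
     (\<forall>c\<in>D. lvl c \<le> lmax) \<and>
     card {c\<in>D. lvl c = 0} = n \<and>
     C \<subseteq> D \<and>
     card {c\<in>C. lvl c = lmax} = k \<and>
     (\<forall>c\<in>C. 1 \<le> lvl c \<longrightarrow>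
        children c \<subseteq> {c'\<in>C. lvl c' = lvl c - 1} \<and> card (children c) = k) \<and>
     (\<forall>c\<in>C. \<forall>c'\<in>C. lvl c = lvl c' \<and> 1 \<le> lvl c \<and> c \<noteq> c' \<longrightarrow>
        children c \<inter> children c' = {})"

text \<open>Common network dynamics. N: (finite) set of neurons, lay: layer of a neuron,
  w: weights, tau: threshold, F: failed neurons, I: layer-0 neurons firing at time 0.
  fires ... t v  means x_v(t) = 1.\<close>
fun fires :: "'n set \<Rightarrow> ('n \<Rightarrow> nat) \<Rightarrow> ('n \<Rightarrow> 'n \<Rightarrow> real) \<Rightarrow> real \<Rightarrow> 'n set \<Rightarrow> 'n set
              \<Rightarrow> nat \<Rightarrow> 'n \<Rightarrow> bool" where
  "fires N lay w \<tau> F I 0 v = (v \<in> N \<and> v \<notin> F \<and> lay v = 0 \<and> v \<in> I)"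
| "fires N lay w \<tau> F I (Suc t) v =
     (v \<in> N \<and> v \<notin> F \<and> 1 \<le> lay v \<and>
      \<tau> \<le> (\<Sum>u\<in>{u\<in>N. lay u = lay v - 1}. w u v * (if fires N lay w \<tau> F I t u then 1 else 0)))"

definition A1_weight :: "('c \<Rightarrow> nat) \<Rightarrow> 'c set \<Rightarrow> ('c \<Rightarrow> 'c set) \<Rightarrow> ('c \<Rightarrow> 'n) \<Rightarrow> 'n \<Rightarrow> 'n \<Rightarrow> real" where
  "A1_weight lvl C children rep u v =
     (if \<exists>c\<in>C. 1 \<le> lvl c \<and> v = rep c \<and> (\<exists>c'\<in>children c. u = rep c') then 1 else 0)"

definition L_weight :: "('n \<times> 'n) set \<Rightarrow> 'n \<Rightarrow> 'n \<Rightarrow> real" where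
  "L_weight E u v = (if (u, v) \<in> E then 1 else 0)"

end

theory Submission
  imports Defs "HOL-Library.Disjoint_Sets"
begin

text \<open>Induction on the level of \<open>c\<close>. If \<open>rep c\<close> fires in \<open>A\<^sub>1\<close>, at least \<open>r\<^sub>2 k\<close> children
  of \<open>c\<close> have firing representatives, so by induction all non-failed neurons of their
  \<open>reps\<close> fire in \<open>L\<close>. Every \<open>v \<in> reps c\<close> has at least \<open>a m (1 - \<epsilon>)\<close> incoming edges from
  the non-failed \<open>reps\<close> of each such child, and these sets are disjoint, so \<open>v\<close> receives
  at least \<open>a r\<^sub>2 k m (1 - \<epsilon>)\<close> spikes and fires, unless it has failed. Hence all of the
  at least \<open>m (1 - \<epsilon>)\<close> non-failed neurons of \<open>reps c\<close> fire.\<close>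

lemma card_UN_disjoint_ge:
  fixes q :: real
  assumes "finite I" "disjoint_family_on A I" "\<And>i. i \<in> I \<Longrightarrow> finite (A i)"
    and "\<And>i. i \<in> I \<Longrightarrow> q \<le> card (A i)"
  shows "card I * q \<le> card (\<Union>i\<in>I. A i)"
proof -
  have "card I * q = (\<Sum>i\<in>I. q)" by simp
  also have "\<dots> \<le> (\<Sum>i\<in>I. real (card (A i)))" using assms(4) by (rule sum_mono)
  also have "\<dots> = card (\<Union>i\<in>I. A i)" using card_UN_disjoint'[OF assms(2,3,1)] by simp
  finally show ?thesis .
qed

lemma fires_Suc_imp_threshold_le_card:
  assumes "finite N" "fires N lay w \<tau> F I (Suc t) v" "\<And>u. w u v = 0 \<or> w u v = 1"
  shows "\<tau> \<le> card {u\<in>N. lay u = lay v - 1 \<and> w u v = 1 \<and> fires N lay w \<tau> F I t u}"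
proof -
  let ?fires = "fires N lay w \<tau> F I t"
  have "w u v * (if ?fires u then 1 else 0) = (if w u v = 1 \<and> ?fires u then 1 else 0)" for u
    using assms(3)[of u] by auto
  then have "\<tau> \<le> (\<Sum>u\<in>{u\<in>N. lay u = lay v - 1}. if w u v = 1 \<and> ?fires u then 1 else 0)"
    using assms(2) by simp
  also have "\<dots> = card {u\<in>{u\<in>N. lay u = lay v - 1}. w u v = 1 \<and> ?fires u}"
    using assms(1) by (simp add: sum.inter_filter[symmetric])
  finally show ?thesis by (simp add: conj_assoc)
qed

lemma fires_SucI:
  assumes "finite N" "v \<in> N" "v \<notin> F" "1 \<le> lay v" "\<And>u. 0 \<le> w u v"
    and "U \<subseteq> {u\<in>N. lay u = lay v - 1}"
    and "\<And>u. u \<in> U \<Longrightarrow> 1 \<le> w u v" "\<And>u. u \<in> U \<Longrightarrow> fires N lay w \<tau> F I t u"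
    and "\<tau> \<le> card U"
  shows "fires N lay w \<tau> F I (Suc t) v"
proof -
  let ?input = "\<lambda>u. w u v * (if fires N lay w \<tau> F I t u then 1 else 0)"
  have "\<tau> \<le> (\<Sum>u\<in>U. 1)" using assms(9) by simp
  also have "\<dots> \<le> (\<Sum>u\<in>U. ?input u)" using assms(7,8) by (intro sum_mono) simp
  also have "\<dots> \<le> (\<Sum>u\<in>{u\<in>N. lay u = lay v - 1}. ?input u)"
    using assms(1,5,6) by (intro sum_mono2) auto
  finally show ?thesis using assms(2-4) by simp
qed

lemma A1_weight_rep:
  assumes "inj_on rep C" "c \<in> C" "1 \<le> lvl c"
  shows "A1_weight lvl C children rep u (rep c) = (if u \<in> rep ` children c then 1 else 0)"
  using assms unfolding A1_weight_def inj_on_def by auto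

lemma A1_fires_Suc_imp_card_children:
  assumes "finite N" "inj_on rep C" "c \<in> C" "1 \<le> lvl c" "finite (children c)"
    and "fires N lay (A1_weight lvl C children rep) \<tau> F I (Suc t) (rep c)"
  shows "\<tau> \<le> card {c'\<in>children c. fires N lay (A1_weight lvl C children rep) \<tau> F I t (rep c')}"
proof -
  let ?w = "A1_weight lvl C children rep"
  let ?S = "{c'\<in>children c. fires N lay ?w \<tau> F I t (rep c')}"
  have "\<tau> \<le> card {u\<in>N. lay u = lay (rep c) - 1 \<and> ?w u (rep c) = 1 \<and> fires N lay ?w \<tau> F I t u}"
    using assms(1,6) by (rule fires_Suc_imp_threshold_le_card) (simp add: A1_weight_def)
  also have "\<dots> \<le> card (rep ` ?S)"
    using assms(5) A1_weight_rep[where lvl = lvl and children = children, OF assms(2-4)]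
    by (intro of_nat_mono card_mono) auto
  also have "\<dots> \<le> card ?S" using assms(5) by (simp add: card_image_le)
  finally show ?thesis .
qed

lemma L_fires_SucI:
  fixes q :: real
  assumes "finite N" "v \<in> N" "v \<notin> F" "1 \<le> lay v"
    and "finite S" "disjoint_family_on reps S"
    and "\<And>c. c \<in> S \<Longrightarrow> reps c \<subseteq> {u\<in>N. lay u = lay v - 1}"
    and "\<And>c. c \<in> S \<Longrightarrow> reps c - F \<subseteq> {u. fires N lay (L_weight E) \<tau> F I t u}"
    and "\<And>c. c \<in> S \<Longrightarrow> q \<le> card {u\<in>reps c - F. (u, v) \<in> E}"
    and "\<tau> \<le> card S * q"
  shows "fires N lay (L_weight E) \<tau> F I (Suc t) v"
proof -
  let ?in = "\<lambda>c. {u\<in>reps c - F. (u, v) \<in> E}"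
  have fin: "finite (?in c)" if "c \<in> S" for c
    using assms(1) assms(7)[OF that] by (auto intro: finite_subset[rotated])
  have "card S * q \<le> card (\<Union>c\<in>S. ?in c)"
    using assms(5) _ fin assms(9)
    by (rule card_UN_disjoint_ge) (use assms(6) in \<open>auto simp: disjoint_family_on_def\<close>)
  then show ?thesis
    using assms(1-4,7,8,10)
    by (intro fires_SucI[where U = "\<Union>c\<in>S. ?in c"]) (auto simp: L_weight_def)
qed

text \<open>\<open>X\<close> plays the role of \<open>D\<^sub>0 \<union> C\<close>. The threshold of \<open>L\<close> is factored as \<open>\<tau> * q\<close>, where
  \<open>\<tau> = r\<^sub>2 k\<close> is the threshold of \<open>A\<^sub>1\<close> and \<open>q = a m (1 - \<epsilon>)\<close> is the guaranteed number of
  edges into each neuron of \<open>reps c\<close> from the non-failed \<open>reps\<close> of each child of \<open>c\<close>.\<close>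

locale hierarchy_networks =
  fixes X C :: "'c set" and lvl :: "'c \<Rightarrow> nat" and children :: "'c \<Rightarrow> 'c set"
    and N1 :: "'n set" and lay1 :: "'n \<Rightarrow> nat" and rep :: "'c \<Rightarrow> 'n"
    and N2 :: "'m set" and lay2 :: "'m \<Rightarrow> nat" and reps :: "'c \<Rightarrow> 'm set"
    and E :: "('m \<times> 'm) set" and F :: "'m set" and \<tau> q :: real
  assumes C_sub: "C \<subseteq> X" and upper_levels_in_C: "\<And>c. c \<in> X \<Longrightarrow> 1 \<le> lvl c \<Longrightarrow> c \<in> C"
    and children_sub: "\<And>c. c \<in> C \<Longrightarrow> 1 \<le> lvl c \<Longrightarrow> children c \<subseteq> {c'\<in>C. lvl c' = lvl c - 1}"
    and finite_children: "\<And>c. c \<in> C \<Longrightarrow> 1 \<le> lvl c \<Longrightarrow> finite (children c)"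
    and finite_N1: "finite N1" and rep_inj: "inj_on rep X"
    and finite_N2: "finite N2" and reps_sub: "\<And>c. c \<in> X \<Longrightarrow> reps c \<subseteq> N2"
    and lay2_reps: "\<And>c v. c \<in> X \<Longrightarrow> v \<in> reps c \<Longrightarrow> lay2 v = lvl c"
    and reps_disjoint: "disjoint_family_on reps X"
    and q_nonneg: "0 \<le> q"
    and E_in_degree: "\<And>c c' v. c \<in> C \<Longrightarrow> 1 \<le> lvl c \<Longrightarrow> v \<in> reps c \<Longrightarrow> c' \<in> children c \<Longrightarrow>
                         q \<le> card {u\<in>reps c' - F. (u, v) \<in> E}"
begin

abbreviation fires1 :: "'c set \<Rightarrow> nat \<Rightarrow> 'n \<Rightarrow> bool" where
  "fires1 B \<equiv> fires N1 lay1 (A1_weight lvl C children rep) \<tau> {} (rep ` B)"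

abbreviation fires2 :: "'c set \<Rightarrow> nat \<Rightarrow> 'm \<Rightarrow> bool" where
  "fires2 B \<equiv> fires N2 lay2 (L_weight E) (\<tau> * q) F (\<Union>b\<in>B. reps b - F)"

lemma reps_fire_if_rep_fires:
  assumes B: "B \<subseteq> {c\<in>C. lvl c = 0}"
  shows "c \<in> X \<Longrightarrow> fires1 B (lvl c) (rep c) \<Longrightarrow> reps c - F \<subseteq> {v. fires2 B (lvl c) v}"
proof (induction "lvl c" arbitrary: c)
  case 0
  then obtain b where "b \<in> B" "rep c = rep b" by auto
  with B C_sub rep_inj \<open>c \<in> X\<close> have "c \<in> B" by (auto dest: inj_onD)
  with 0 reps_sub lay2_reps show ?case by auto
next
  case (Suc l c)
  have c: "c \<in> C" "1 \<le> lvl c" using Suc.hyps(2) Suc.prems(1) upper_levels_in_C by auto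
  define S where "S = {c'\<in>children c. fires1 B l (rep c')}"
  have S_sub: "S \<subseteq> {c'\<in>C. lvl c' = l}"
    using children_sub[OF c] Suc.hyps(2) by (auto simp: S_def)
  have reps_S: "reps c' \<subseteq> {u\<in>N2. lay2 u = l}" if "c' \<in> S" for c'
    using S_sub C_sub that reps_sub lay2_reps by blast
  have "\<tau> \<le> card S"
    using A1_fires_Suc_imp_card_children[where lvl = lvl and children = children, OF finite_N1
        inj_on_subset[OF rep_inj C_sub] c finite_children[OF c] Suc.prems(2)[folded Suc.hyps(2)]]
    by (simp add: S_def)
  then have threshold: "\<tau> * q \<le> card S * q" using q_nonneg by (rule mult_right_mono)
  show ?case
  proof
    fix v assume v: "v \<in> reps c - F"
    have "v \<in> N2" "lay2 v = Suc l"
      using reps_sub lay2_reps Suc.hyps(2) Suc.prems(1) v by auto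
    then have "fires2 B (Suc l) v"
    proof (intro L_fires_SucI[OF finite_N2 _ _ _ _ _ _ _ _ threshold])
      show "finite S" using finite_children[OF c] by (simp add: S_def)
      show "disjoint_family_on reps S"
        using reps_disjoint S_sub C_sub by (blast intro: disjoint_family_on_mono)
      show "reps c' - F \<subseteq> {u. fires2 B l u}" if "c' \<in> S" for c'
      proof -
        have "c' \<in> X" "lvl c' = l" "fires1 B l (rep c')"
          using S_sub C_sub that by (auto simp: S_def)
        then show ?thesis using Suc.hyps(1)[of c'] by simp
      qed
      show "q \<le> card {u\<in>reps c' - F. (u, v) \<in> E}" if "c' \<in> S" for c'
        using E_in_degree c v that by (auto simp: S_def)
    qed (use v reps_S in auto)
    then show "v \<in> {v. fires2 B (lvl c) v}" using Suc.hyps(2) by simp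
  qed
qed

lemma card_non_failed_le_card_firing:
  assumes "B \<subseteq> {c\<in>C. lvl c = 0}" "c \<in> X" "fires1 B (lvl c) (rep c)"
  shows "card (reps c - F) \<le> card {v\<in>reps c. fires2 B (lvl c) v}"
  using reps_fire_if_rep_fires[OF assms] finite_subset[OF reps_sub[OF assms(2)] finite_N2]
  by (intro card_mono) auto

end

theorem theorem8p1:
  fixes lmax n k m :: nat
    and D C :: "'c set" and lvl :: "'c \<Rightarrow> nat" and children :: "'c \<Rightarrow> 'c set"
    and r1 r2 \<epsilon> a :: real
    and N1 :: "'n set" and lay1 :: "'n \<Rightarrow> nat" and rep :: "'c \<Rightarrow> 'n"
    and N2 :: "'m set" and lay2 :: "'m \<Rightarrow> nat" and reps :: "'c \<Rightarrow> 'm set"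
    and E :: "('m \<times> 'm) set" and F :: "'m set"
  assumes pos: "0 < lmax" "0 < n" "0 < k" "0 < m"
    and CH: "concept_hierarchy lmax n k D lvl C children"
    and r1: "0 \<le> r1" "r1 \<le> 1" and r2: "0 \<le> r2" "r2 \<le> 1" and eps: "0 \<le> \<epsilon>" "\<epsilon> \<le> 1"
    and a: "0 < a" and r1_le: "r1 \<le> a * r2 * (1 - \<epsilon>)"
    \<comment> \<open>network A_1\<close>
    and N1_fin: "finite N1" and N1_lay: "\<forall>v\<in>N1. lay1 v \<le> lmax"
    and rep_N: "\<forall>c\<in>{c\<in>D. lvl c = 0} \<union> C. rep c \<in> N1 \<and> lay1 (rep c) = lvl c"
    and rep_inj: "inj_on rep ({c\<in>D. lvl c = 0} \<union> C)"
    \<comment> \<open>network L\<close>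
    and N2_fin: "finite N2" and N2_lay: "\<forall>v\<in>N2. lay2 v \<le> lmax"
    and reps_N: "\<forall>c\<in>{c\<in>D. lvl c = 0} \<union> C.
                   reps c \<subseteq> N2 \<and> card (reps c) = m \<and> (\<forall>v\<in>reps c. lay2 v = lvl c)"
    and reps_disj: "\<forall>c\<in>{c\<in>D. lvl c = 0} \<union> C. \<forall>c'\<in>{c\<in>D. lvl c = 0} \<union> C.
                      c \<noteq> c' \<longrightarrow> reps c \<inter> reps c' = {}"
    and E_sub: "E \<subseteq> {(u, v). \<exists>c\<in>C. 1 \<le> lvl c \<and> v \<in> reps c \<and> (\<exists>c'\<in>children c. u \<in> reps c')}"
    and F_ok: "\<forall>c\<in>{c\<in>D. lvl c = 0} \<union> C. real (card (reps c - F)) \<ge> real m * (1 - \<epsilon>)"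
    and E_ok: "\<forall>c\<in>C. 1 \<le> lvl c \<longrightarrow> (\<forall>v\<in>reps c. \<forall>c'\<in>children c.
                 real (card {u\<in>reps c' - F. (u, v) \<in> E}) \<ge> a * real m * (1 - \<epsilon>))"
  shows "\<forall>B \<subseteq> {c\<in>C. lvl c = 0}. \<forall>c\<in>{c\<in>D. lvl c = 0} \<union> C.
           fires N1 lay1 (A1_weight lvl C children rep) (r2 * real k) {} (rep ` B) (lvl c) (rep c)
           \<longrightarrow> real (card {v\<in>reps c.
                 fires N2 lay2 (L_weight E) (a * r2 * real k * real m * (1 - \<epsilon>)) F
                       (\<Union>b\<in>B. reps b - F) (lvl c) v}) \<ge> real m * (1 - \<epsilon>)"
proof -
  let ?X = "{c\<in>D. lvl c = 0} \<union> C"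
  have children: "children c \<subseteq> {c'\<in>C. lvl c' = lvl c - 1}" "card (children c) = k"
    if "c \<in> C" "1 \<le> lvl c" for c
    using CH that unfolding concept_hierarchy_def by auto
  interpret hierarchy_networks ?X C lvl children N1 lay1 rep N2 lay2 reps E F
    "r2 * real k" "a * real m * (1 - \<epsilon>)"
  proof
    show "finite (children c)" if "c \<in> C" "1 \<le> lvl c" for c
      using children(2)[OF that] pos(3) card.infinite by force
    show "disjoint_family_on reps ?X"
      using reps_disj by (simp add: disjoint_family_on_def)
    show "0 \<le> a * real m * (1 - \<epsilon>)" using a eps by simp
  qed (use children(1) N1_fin rep_inj N2_fin reps_N E_ok in auto)
  have threshold: "a * r2 * real k * real m * (1 - \<epsilon>) = r2 * real k * (a * real m * (1 - \<epsilon>))"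
    by (simp add: ac_simps)
  show ?thesis
    unfolding threshold
  proof (intro allI impI ballI)
    fix B c assume "B \<subseteq> {c\<in>C. lvl c = 0}" "c \<in> ?X" "fires1 B (lvl c) (rep c)"
    then have "card (reps c - F) \<le> card {v\<in>reps c. fires2 B (lvl c) v}"
      by (rule card_non_failed_le_card_firing)
    then show "real m * (1 - \<epsilon>) \<le> card {v\<in>reps c. fires2 B (lvl c) v}"
      using F_ok \<open>c \<in> ?X\<close> by (meson of_nat_le_iff order_trans)
  qed
qed

end
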